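(* Suppose a checkpoint $C$ of epoch $e$ is finalized on chain $c$, and a checkpoint $C'$ of epoch $e'>e$ is justified on chain $c'$. Then $c$ and $c'$ have a common prefix up to epoch $e$, i.e. the block of $C$ is an ancestor of (or equal to) the blocks of $c'$ at epochs $\ge e$.
   Context: System: $n$ validators, each with equal stake, of which $f<n/3$ are Byzantine; the validator set is fixed between finalized checkpoints. Blocks form a tree rooted at the genesis block, and a chain is a path from the genesis block. A checkpoint is a pair $(b,e)$, where $b$ is the block of the first slot of epoch $e$ on the chain. A checkpoint vote is a signed pair, source $(a,e_a)$ and target $(b,e_b)$, with $e_a<e_b$. A supermajority link $(a,e_a)\to(b,e_b)$ exists when more than $2/3$ of the validators cast that checkpoint vote. A checkpoint is justified if it is the target of a supermajority link; the genesis checkpoint is justified. A checkpoint $(a,e_a)$ is finalized if: - it is justified; - there is a supermajority link $(a,e_a)\to(b,e_b)$ with $e_b-e_a\le 2$; - if $e_b-e_a=2$, the checkpoint at epoch $e_a+1$ on that chain is justified. Honest validators follow these rules: - each casts at most one checkpoint vote per epoch; - the source is the justified checkpoint with the highest epoch in its view; - the target is the current epoch's checkpoint on the candidate chain, selected by a fork choice rule that only follows chains extending the block of that highest justified checkpoint. *)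

theory Defs
  imports Main
begin

definition anc :: "('b \<Rightarrow> 'b) \<Rightarrow> 'b \<Rightarrow> 'b \<Rightarrow> bool" where
  "anc par x y \<longleftrightarrow> (\<exists>k. (par ^^ k) y = x)"

definition block_tree :: "('b \<Rightarrow> 'b) \<Rightarrow> 'b \<Rightarrow> ('b \<Rightarrow> nat) \<Rightarrow> bool" where
  "block_tree par g slot \<longleftrightarrow>
     par g = g \<and> slot g = 0 \<and> (\<forall>b. b \<noteq> g \<longrightarrow> slot (par b) < slot b) \<and> (\<forall>b. anc par g b)"

(* A chain is the path from genesis to a head block h.  The checkpoint block of
   epoch e on chain h is the block of the first slot of epoch e (slot e*SPE), i.e.
   the latest ancestor of h whose slot is <= e*SPE. *)
definition cp :: "('b \<Rightarrow> 'b) \<Rightarrow> ('b \<Rightarrow> nat) \<Rightarrow> nat \<Rightarrow> 'b \<Rightarrow> nat \<Rightarrow> 'b" where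
  "cp par slot SPE h e = (par ^^ (LEAST k. slot ((par ^^ k) h) \<le> e * SPE)) h"

type_synonym 'b checkpoint = "'b \<times> nat"
type_synonym ('v, 'b) vote = "'v \<times> 'b checkpoint \<times> 'b checkpoint"  (* validator, source, target *)

definition is_checkpoint :: "('b \<Rightarrow> 'b) \<Rightarrow> ('b \<Rightarrow> nat) \<Rightarrow> nat \<Rightarrow> 'b checkpoint \<Rightarrow> bool" where
  "is_checkpoint par slot SPE C \<longleftrightarrow> (\<exists>h. cp par slot SPE h (snd C) = fst C)"

definition smlink :: "'v set \<Rightarrow> ('v, 'b) vote set \<Rightarrow> 'b checkpoint \<Rightarrow> 'b checkpoint \<Rightarrow> bool" where
  "smlink V W s t \<longleftrightarrow> 3 * card {v \<in> V. (v, s, t) \<in> W} > 2 * card V"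

definition justified :: "'v set \<Rightarrow> 'b \<Rightarrow> ('v, 'b) vote set \<Rightarrow> 'b checkpoint \<Rightarrow> bool" where
  "justified V g W C \<longleftrightarrow> C = (g, 0) \<or> (\<exists>s. smlink V W s C)"

definition finalized ::
  "('b \<Rightarrow> 'b) \<Rightarrow> ('b \<Rightarrow> nat) \<Rightarrow> nat \<Rightarrow> 'v set \<Rightarrow> 'b \<Rightarrow> ('v, 'b) vote set \<Rightarrow> 'b checkpoint \<Rightarrow> bool" where
  "finalized par slot SPE V g W C \<longleftrightarrow>
     justified V g W C \<and>
     (\<exists>b eb. smlink V W C (b, eb) \<and> eb - snd C \<le> 2 \<and>
        (eb - snd C = 2 \<longrightarrow> justified V g W (cp par slot SPE b (snd C + 1), snd C + 1)))"

(* Honest behaviour of validator v; view e = votes seen by v when voting in epoch e. *)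
definition honest ::
  "('b \<Rightarrow> 'b) \<Rightarrow> ('b \<Rightarrow> nat) \<Rightarrow> nat \<Rightarrow> 'v set \<Rightarrow> 'b \<Rightarrow> ('v, 'b) vote set
   \<Rightarrow> (nat \<Rightarrow> ('v, 'b) vote set) \<Rightarrow> 'v \<Rightarrow> bool" where
  "honest par slot SPE V g W view v \<longleftrightarrow>
     (\<forall>e. view e \<subseteq> W) \<and> (\<forall>e e'. e \<le> e' \<longrightarrow> view e \<subseteq> view e') \<and>
     (\<forall>s t s' t'. (v, s, t) \<in> W \<longrightarrow> (v, s', t') \<in> W \<longrightarrow> snd t = snd t' \<longrightarrow> s = s' \<and> t = t') \<and>
     (\<forall>a ea b eb. (v, (a, ea), (b, eb)) \<in> W \<longrightarrow>
        justified V g (view eb) (a, ea) \<and>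
        (\<forall>a' ea'. justified V g (view eb) (a', ea') \<longrightarrow> ea' \<le> ea) \<and>
        (\<exists>h. anc par a h \<and> b = cp par slot SPE h eb))"

end

theory Submission
  imports Defs
begin

text \<open>The target of an honest vote always descends from its source. Let \<open>(a, e)\<close> be
  finalized via the link \<open>(a, e) \<rightarrow> (b, eb)\<close> and let \<open>s \<rightarrow> (d, E)\<close>, \<open>E > e\<close>, justify
  \<open>(d, E)\<close>. Two supermajority links share an honest voter. If \<open>E \<le> eb\<close>, then \<open>d\<close> is \<open>b\<close> or
  the checkpoint justified at epoch \<open>e + 1\<close> below \<open>b\<close>, because honest validators vote once
  per epoch. If \<open>E > eb\<close>, the voter had already seen \<open>(a, e)\<close> justified when voting in epoch
  \<open>E\<close>, so its source \<open>s\<close> has epoch at least \<open>e\<close>; by induction on \<open>E\<close>, \<open>s\<close> and hence \<open>d\<close>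
  descend from \<open>a\<close>.\<close>

lemma anc_refl [simp]: "anc par x x"
  unfolding anc_def by (metis funpow_0)

lemma anc_trans:
  assumes "anc par x y" "anc par y z"
  shows "anc par x z"
proof -
  obtain i j where "(par ^^ i) z = y" "(par ^^ j) y = x"
    using assms unfolding anc_def by blast
  then have "(par ^^ (j + i)) z = x" by (simp add: funpow_add)
  then show ?thesis unfolding anc_def by blast
qed

lemma block_tree_slot_0_eq_genesis:
  assumes "block_tree par g slot" "slot b = 0"
  shows "b = g"
  using assms unfolding block_tree_def by force

lemma block_tree_cp_exists:
  assumes "block_tree par g slot"
  shows "\<exists>k. slot ((par ^^ k) h) \<le> E * SPE"
  using assms unfolding block_tree_def anc_def by (metis le0)

lemma cp_anc_head: "anc par (cp par slot SPE h E) h"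
  unfolding cp_def anc_def by blast

lemma cp_slot_le:
  assumes "block_tree par g slot"
  shows "slot (cp par slot SPE h E) \<le> E * SPE"
  using LeastI_ex[OF block_tree_cp_exists[OF assms]] unfolding cp_def .

lemma anc_cp_if_anc_head:
  assumes "anc par x h" "slot x \<le> E * SPE"
  shows "anc par x (cp par slot SPE h E)"
proof -
  obtain j where j: "(par ^^ j) h = x" using assms(1) unfolding anc_def by blast
  define L where "L = (LEAST k. slot ((par ^^ k) h) \<le> E * SPE)"
  have "L \<le> j" unfolding L_def using j assms(2) by (intro Least_le) simp
  then have "x = (par ^^ (j - L)) ((par ^^ L) h)"
    using j by (metis funpow_add le_add_diff_inverse2 comp_apply)
  then show ?thesis unfolding cp_def L_def[symmetric] anc_def by blast
qed

lemma is_checkpoint_slot_le: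
  assumes "block_tree par g slot" "is_checkpoint par slot SPE (b, E)"
  shows "slot b \<le> E * SPE"
  using assms cp_slot_le unfolding is_checkpoint_def by fastforce

lemma smlink_mono:
  assumes "finite V" "W1 \<subseteq> W2" "smlink V W1 s t"
  shows "smlink V W2 s t"
proof -
  have "card {v \<in> V. (v, s, t) \<in> W1} \<le> card {v \<in> V. (v, s, t) \<in> W2}"
    using assms by (intro card_mono) auto
  then show ?thesis using assms(3) unfolding smlink_def by linarith
qed

lemma justified_mono:
  assumes "finite V" "W1 \<subseteq> W2" "justified V g W1 C"
  shows "justified V g W2 C"
  using assms smlink_mono unfolding justified_def by blast

lemma smlinks_common_honest_voter:
  assumes "finite V" "Byz \<subseteq> V" "3 * card Byz < card V"
    and "smlink V W s t" "smlink V W s' t'"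
  shows "\<exists>v \<in> V - Byz. (v, s, t) \<in> W \<and> (v, s', t') \<in> W"
proof (rule ccontr)
  assume none: "\<not> ?thesis"
  define A where "A = {v \<in> V. (v, s, t) \<in> W}"
  define B where "B = {v \<in> V. (v, s', t') \<in> W}"
  have fin: "finite A" "finite B" using assms(1) unfolding A_def B_def by auto
  have "A \<inter> B \<subseteq> Byz" using none unfolding A_def B_def by auto
  then have "card (A \<inter> B) \<le> card Byz" using assms(1,2) by (meson card_mono finite_subset)
  moreover have "card (A \<union> B) \<le> card V" using assms(1) unfolding A_def B_def by (intro card_mono) auto
  moreover have "card A + card B = card (A \<union> B) + card (A \<inter> B)" using fin card_Un_Int by blast
  moreover have "3 * card A > 2 * card V" "3 * card B > 2 * card V"
    using assms(4,5) unfolding smlink_def A_def B_def by auto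
  ultimately show False using assms(3) by linarith
qed

context
  fixes par :: "'b \<Rightarrow> 'b" and slot SPE V g W view and v :: 'v
  assumes honest: "honest par slot SPE V g W view v"
begin

lemma honest_view_subset: "view e \<subseteq> W"
  using honest unfolding honest_def by (elim conjE) (rule spec)

lemma honest_view_mono: "e \<le> e' \<Longrightarrow> view e \<subseteq> view e'"
  using honest[unfolded honest_def, THEN conjunct2, THEN conjunct1] by blast

lemma honest_one_vote_per_epoch: "(v, s, (x, E)) \<in> W \<Longrightarrow> (v, s', (y, E)) \<in> W \<Longrightarrow> x = y"
  using honest[unfolded honest_def, THEN conjunct2, THEN conjunct2, THEN conjunct1, rule_format]
  by fastforce

lemmas honest_vote = honest[unfolded honest_def, THEN conjunct2, THEN conjunct2, THEN conjunct2, rule_format]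

lemma honest_source_justified_in_view: "(v, (a, ea), (b, eb)) \<in> W \<Longrightarrow> justified V g (view eb) (a, ea)"
  using honest_vote by blast

lemma honest_source_latest:
  "(v, (a, ea), (b, eb)) \<in> W \<Longrightarrow> justified V g (view eb) (a', ea') \<Longrightarrow> ea' \<le> ea"
  using honest_vote by blast

lemma honest_target_on_source_chain:
  "(v, (a, ea), (b, eb)) \<in> W \<Longrightarrow> \<exists>h. anc par a h \<and> b = cp par slot SPE h eb"
  using honest_vote by blast

end

locale casper =
  fixes par :: "'b \<Rightarrow> 'b" and g :: 'b and slot :: "'b \<Rightarrow> nat" and SPE :: nat
    and V Byz :: "'v set" and W :: "('v, 'b) vote set" and view :: "'v \<Rightarrow> nat \<Rightarrow> ('v, 'b) vote set"
  assumes tree: "block_tree par g slot"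
    and finite_V: "finite V" and Byz_subset: "Byz \<subseteq> V" and Byz_card: "3 * card Byz < card V"
    and votes_wf: "\<forall>(v, s, t) \<in> W. is_checkpoint par slot SPE s \<and> is_checkpoint par slot SPE t \<and> snd s < snd t"
    and honest_V: "\<forall>v \<in> V - Byz. honest par slot SPE V g W (view v) v"
begin

abbreviation "justified\<^sub>W \<equiv> justified V g W"

lemma common_honest_voter:
  "smlink V W s t \<Longrightarrow> smlink V W s' t' \<Longrightarrow> \<exists>v \<in> V - Byz. (v, s, t) \<in> W \<and> (v, s', t') \<in> W"
  using smlinks_common_honest_voter[OF finite_V Byz_subset Byz_card] .

lemma vote_source_slot_le: "(v, (a, ea), t) \<in> W \<Longrightarrow> slot a \<le> ea * SPE"
  using votes_wf is_checkpoint_slot_le[OF tree] by fastforce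

lemma vote_target_slot_le: "(v, s, (b, eb)) \<in> W \<Longrightarrow> slot b \<le> eb * SPE"
  using votes_wf is_checkpoint_slot_le[OF tree] by fastforce

lemma vote_epoch_less: "(v, (a, ea), (b, eb)) \<in> W \<Longrightarrow> ea < eb"
  using votes_wf by fastforce

lemma justified_slot_le:
  assumes "justified\<^sub>W (b, E)"
  shows "slot b \<le> E * SPE"
proof (cases "(b, E) = (g, 0)")
  case True
  then show ?thesis using tree unfolding block_tree_def by simp
next
  case False
  then obtain s where "smlink V W s (b, E)" using assms unfolding justified_def by blast
  then obtain v where "(v, s, (b, E)) \<in> W" using common_honest_voter by blast
  then show ?thesis by (rule vote_target_slot_le)
qed

lemma justified_epoch_0_iff: "justified\<^sub>W (b, 0) \<longleftrightarrow> b = g"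
proof
  assume "justified\<^sub>W (b, 0)"
  then have "slot b = 0" using justified_slot_le by fastforce
  then show "b = g" by (rule block_tree_slot_0_eq_genesis[OF tree])
qed (simp add: justified_def)

context
  fixes v assumes v_honest: "v \<in> V - Byz"
begin

lemma honest_v: "honest par slot SPE V g W (view v) v"
  using honest_V v_honest by (rule bspec)

lemma honest_source_justified: "(v, (a, ea), (b, eb)) \<in> W \<Longrightarrow> justified\<^sub>W (a, ea)"
  by (rule justified_mono[OF finite_V honest_view_subset[OF honest_v]
        honest_source_justified_in_view[OF honest_v]])

lemma honest_no_older_source:
  assumes "(v, (a, ea), (b, eb)) \<in> W" "(v, (s, es), (d, E)) \<in> W" "eb \<le> E"
  shows "ea \<le> es"
proof -
  have "view v eb \<subseteq> view v E" by (rule honest_view_mono[OF honest_v assms(3)])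
  moreover have "justified V g (view v eb) (a, ea)"
    by (rule honest_source_justified_in_view[OF honest_v assms(1)])
  ultimately have "justified V g (view v E) (a, ea)" by (rule justified_mono[OF finite_V])
  then show ?thesis by (rule honest_source_latest[OF honest_v assms(2)])
qed

lemma honest_target_descends: "(v, (a, ea), (b, eb)) \<in> W \<Longrightarrow> anc par a b"
proof -
  assume vote: "(v, (a, ea), (b, eb)) \<in> W"
  then obtain h where "anc par a h" "b = cp par slot SPE h eb"
    using honest_target_on_source_chain[OF honest_v] by blast
  moreover have "slot a \<le> eb * SPE"
    using vote_source_slot_le[OF vote] vote_epoch_less[OF vote]
    by (meson le_trans less_imp_le_nat mult_le_mono1)
  ultimately show ?thesis by (simp add: anc_cp_if_anc_head)
qed

end

lemma justified_same_epoch: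
  assumes "justified\<^sub>W (x, E)" "justified\<^sub>W (y, E)"
  shows "x = y"
proof (cases "E = 0")
  case True
  then show ?thesis using assms[unfolded True justified_epoch_0_iff] by simp
next
  case False
  then obtain s s' where "smlink V W s (x, E)" "smlink V W s' (y, E)"
    using assms unfolding justified_def by blast
  then obtain v where "v \<in> V - Byz" "(v, s, (x, E)) \<in> W" "(v, s', (y, E)) \<in> W"
    using common_honest_voter by blast
  then show ?thesis using honest_one_vote_per_epoch[OF honest_v] by blast
qed

lemma finalized_anc_justified:
  assumes "finalized par slot SPE V g W (a, e)"
  shows "justified\<^sub>W (d, E) \<Longrightarrow> e < E \<Longrightarrow> anc par a d"
proof (induction E arbitrary: d rule: less_induct)
  case (less E d)
  have a_justified: "justified\<^sub>W (a, e)" using assms unfolding finalized_def by (rule conjunct1)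
  have "\<exists>b eb. smlink V W (a, e) (b, eb) \<and> eb - e \<le> 2 \<and>
      (eb - e = 2 \<longrightarrow> justified\<^sub>W (cp par slot SPE b (e + 1), e + 1))"
    using assms unfolding finalized_def by simp
  then obtain b eb where fin_link: "smlink V W (a, e) (b, eb)" and "eb - e \<le> 2"
    and mid: "eb - e = 2 \<longrightarrow> justified\<^sub>W (cp par slot SPE b (e + 1), e + 1)"
    by blast
  have "(d, E) \<noteq> (g, 0)" using less.prems(2) by simp
  then obtain s es where "smlink V W (s, es) (d, E)"
    using less.prems(1) unfolding justified_def by (metis prod.exhaust)
  then obtain v where v: "v \<in> V - Byz" "(v, (s, es), (d, E)) \<in> W" "(v, (a, e), (b, eb)) \<in> W"
    using common_honest_voter[OF _ fin_link] by blast
  have a_b: "anc par a b" using honest_target_descends[OF v(1,3)] .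
  have "e < eb" using vote_epoch_less[OF v(3)] .
  consider "E = eb" | "E = e + 1" "eb = e + 2" | "eb < E"
    using \<open>eb - e \<le> 2\<close> \<open>e < eb\<close> less.prems(2) by linarith
  then show ?case
  proof cases
    case 1
    have "d = b" using honest_one_vote_per_epoch[OF honest_v[OF v(1)] v(2) v(3)[folded 1]] .
    then show ?thesis using a_b by simp
  next
    case 2
    have "slot a \<le> (e + 1) * SPE" using justified_slot_le[OF a_justified] by simp
    then have "anc par a (cp par slot SPE b (e + 1))" by (rule anc_cp_if_anc_head[OF a_b])
    moreover have "d = cp par slot SPE b (e + 1)"
      using justified_same_epoch[OF less.prems(1)] mid 2 by simp
    ultimately show ?thesis by simp
  next
    case 3
    have "e \<le> es" using honest_no_older_source[OF v(1,3,2)] 3 by simp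
    have s_justified: "justified\<^sub>W (s, es)" using honest_source_justified[OF v(1,2)] .
    have "anc par a s"
    proof (cases "es = e")
      case True
      then show ?thesis using justified_same_epoch[OF a_justified] s_justified by simp
    next
      case False
      then show ?thesis
        using less.IH[OF vote_epoch_less[OF v(2)] s_justified] \<open>e \<le> es\<close> by simp
    qed
    then show ?thesis using honest_target_descends[OF v(1,2)] by (rule anc_trans)
  qed
qed

end

theorem lemma2:
  fixes par :: "'b \<Rightarrow> 'b" and g :: 'b and slot :: "'b \<Rightarrow> nat" and SPE :: nat
    and V Byz :: "'v set" and W :: "('v, 'b) vote set" and view :: "'v \<Rightarrow> nat \<Rightarrow> ('v, 'b) vote set"
    and a d h h' :: 'b and e e' :: nat
  assumes "block_tree par g slot" and "SPE > 0"
    and "finite V" and "Byz \<subseteq> V" and "3 * card Byz < card V"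
    and "\<forall>(v, s, t) \<in> W. is_checkpoint par slot SPE s \<and> is_checkpoint par slot SPE t \<and> snd s < snd t"
    and "\<forall>v \<in> V - Byz. honest par slot SPE V g W (view v) v"
    and "cp par slot SPE h e = a" and "finalized par slot SPE V g W (a, e)"
    and "cp par slot SPE h' e' = d" and "e' > e" and "justified V g W (d, e')"
  shows "\<forall>k \<ge> e. anc par a (cp par slot SPE h' k)"
proof (intro allI impI)
  fix k assume "k \<ge> e"
  interpret casper par g slot SPE V Byz W view
    using assms(1,3-7) by unfold_locales
  have "anc par a d" using finalized_anc_justified assms(9,11,12) by blast
  moreover have "anc par d h'" using cp_anc_head[of par slot SPE h' e'] assms(10) by simp
  ultimately have "anc par a h'" by (rule anc_trans)
  moreover have "slot a \<le> k * SPE"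
    using cp_slot_le[OF tree, where h = h and E = e] assms(8) \<open>k \<ge> e\<close> by (metis le_trans mult_le_mono1)
  ultimately show "anc par a (cp par slot SPE h' k)" by (rule anc_cp_if_anc_head)
qed

end
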